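(* Let $M$ be a graded quasi-primaryful $R$-module. Then the set of all irreducible components of $qp.Spec_g(M)$ (quasi-Zariski topology) is $$\Phi=\{qp\text{-}V_M^g(Gr(q)M)\mid q\in qp\text{-}V_R^g(\mathrm{Ann}(M))\text{ and }Gr(q)\text{ is a minimal element of }V_R^g(\mathrm{Ann}(M))\text{ with respect to inclusion}\}.$$
   Context: $R=\bigoplus_{g\in G}R_g$ is a graded commutative ring with identity graded by a group $G$, $h(R)=\bigcup_g R_g$; $M$ is a graded $R$-module, $h(M)$ its homogeneous elements. $Gr(I)$ is the graded radical of a graded ideal $I$. $(K:_RM)=\{r: rM\subseteq K\}$. Graded prime submodule: proper graded $P$ with $rm\in P$ ($r\in h(R), m\in h(M)$) implying $m\in P$ or $r\in(P:_RM)$. $Gr_M(K)$: intersection of graded prime submodules containing $K$ ($M$ if none). Graded primeful property of $K$: for each graded prime $p\supseteq(K:_RM)$ there is a graded prime submodule $P\supseteq K$ with $(P:_RM)=p$. Graded quasi-primary submodule: proper graded $Q$ with $rm\in Q$ ($r\in h(R),m\in h(M)$) implying $r\in Gr((Q:_RM))$ or $m\in Gr_M(Q)$. $qp.Spec_g(M)$: graded quasi-primary submodules with the graded primeful property. $qp\text{-}V_M^g(K)=\{Q\in qp.Spec_g(M): Gr((Q:_RM))\supseteq Gr((K:_RM))\}$; the quasi-Zariski topology has closed sets exactly these. A graded quasi-primary ideal of $R$ is a proper graded ideal $q$ with $ab\in q$ ($a,b\in h(R)$) implying $a\in Gr(q)$ or $b\in Gr(q)$. For a graded ideal $I$: $qp\text{-}V_R^g(I)$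 is the set of graded quasi-primary ideals of $R$ containing $I$, and $V_R^g(I)$ the set of graded prime ideals of $R$ containing $I$. $M$ is graded quasi-primaryful if $M=0$, or $M\ne 0$ and for every $q\in qp\text{-}V_R^g(\mathrm{Ann}(M))$ there is $Q\in qp.Spec_g(M)$ with $Gr((Q:_RM))=Gr(q)$. An irreducible component is a maximal irreducible subset (a subset $A$ is irreducible if $A\subseteq A_1\cup A_2$, $A_i$ closed, implies $A\subseteq A_1$ or $A\subseteq A_2$). *)

theory Defs
  imports Complex_Main
begin

text \<open>The ring R is the whole type 'a (class comm_ring_1), the module M is the
whole type 'b, with scalar multiplication scale satisfying the library locale module.
The grading group G is the type 'g (class group_add, written additively, not necessarily
commutative).\<close>

definition hom_dec :: "('g \<Rightarrow> 'x::ab_group_add set) \<Rightarrow> 'x \<Rightarrow> ('g \<Rightarrow> 'x) \<Rightarrow> bool" where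
  "hom_dec A x c \<longleftrightarrow> finite {g. c g \<noteq> 0} \<and> (\<forall>g. c g \<in> A g) \<and> x = sum c {g. c g \<noteq> 0}"

definition graded_decomp :: "('g \<Rightarrow> 'x::ab_group_add set) \<Rightarrow> bool" where
  "graded_decomp A \<longleftrightarrow> (\<forall>g. 0 \<in> A g \<and> (\<forall>x\<in>A g. \<forall>y\<in>A g. x - y \<in> A g))
     \<and> (\<forall>x. \<exists>!c. hom_dec A x c)"

definition graded_ring :: "('g::group_add \<Rightarrow> 'a::comm_ring_1 set) \<Rightarrow> bool" where
  "graded_ring Rg \<longleftrightarrow> graded_decomp Rg \<and>
     (\<forall>g h. \<forall>a\<in>Rg g. \<forall>b\<in>Rg h. a * b \<in> Rg (g + h))"

definition graded_module ::
  "('g::group_add \<Rightarrow> 'a::comm_ring_1 set) \<Rightarrow> ('g \<Rightarrow> 'b::ab_group_add set) \<Rightarrow> ('a \<Rightarrow> 'b \<Rightarrow> 'b) \<Rightarrow> bool" where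
  "graded_module Rg Mg scale \<longleftrightarrow> graded_ring Rg \<and> module scale \<and> graded_decomp Mg \<and>
     (\<forall>g h. \<forall>r\<in>Rg g. \<forall>m\<in>Mg h. scale r m \<in> Mg (g + h))"

definition hset :: "('g \<Rightarrow> 'x set) \<Rightarrow> 'x set" where
  "hset A = (\<Union>g. A g)"

definition graded_subset :: "('g \<Rightarrow> 'x::ab_group_add set) \<Rightarrow> 'x set \<Rightarrow> bool" where
  "graded_subset A N \<longleftrightarrow> (\<forall>x\<in>N. \<exists>c. hom_dec A x c \<and> (\<forall>g. c g \<in> N))"

definition is_ideal :: "'a::comm_ring_1 set \<Rightarrow> bool" where
  "is_ideal I \<longleftrightarrow> 0 \<in> I \<and> (\<forall>x\<in>I. \<forall>y\<in>I. x + y \<in> I) \<and> (\<forall>r. \<forall>x\<in>I. r * x \<in> I)"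

definition gr_ideal :: "('g \<Rightarrow> 'a::comm_ring_1 set) \<Rightarrow> 'a set \<Rightarrow> bool" where
  "gr_ideal Rg I \<longleftrightarrow> is_ideal I \<and> graded_subset Rg I"

definition gr_submodule :: "('g \<Rightarrow> 'b::ab_group_add set) \<Rightarrow> ('a::comm_ring_1 \<Rightarrow> 'b \<Rightarrow> 'b) \<Rightarrow> 'b set \<Rightarrow> bool" where
  "gr_submodule Mg scale N \<longleftrightarrow> module.subspace scale N \<and> graded_subset Mg N"

definition colon :: "('a::comm_ring_1 \<Rightarrow> 'b::ab_group_add \<Rightarrow> 'b) \<Rightarrow> 'b set \<Rightarrow> 'a set" where
  "colon scale K = {r. \<forall>m. scale r m \<in> K}"

definition Ann :: "('a::comm_ring_1 \<Rightarrow> 'b::ab_group_add \<Rightarrow> 'b) \<Rightarrow> 'a set" where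
  "Ann scale = colon scale {0}"

definition Gr :: "('g \<Rightarrow> 'a::comm_ring_1 set) \<Rightarrow> 'a set \<Rightarrow> 'a set" where
  "Gr Rg I = {x. \<exists>c. hom_dec Rg x c \<and> (\<forall>g. \<exists>n>0. c g ^ n \<in> I)}"

definition gr_prime_ideal :: "('g \<Rightarrow> 'a::comm_ring_1 set) \<Rightarrow> 'a set \<Rightarrow> bool" where
  "gr_prime_ideal Rg p \<longleftrightarrow> gr_ideal Rg p \<and> p \<noteq> UNIV \<and>
     (\<forall>a\<in>hset Rg. \<forall>b\<in>hset Rg. a * b \<in> p \<longrightarrow> a \<in> p \<or> b \<in> p)"

definition gr_qp_ideal :: "('g \<Rightarrow> 'a::comm_ring_1 set) \<Rightarrow> 'a set \<Rightarrow> bool" where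
  "gr_qp_ideal Rg q \<longleftrightarrow> gr_ideal Rg q \<and> q \<noteq> UNIV \<and>
     (\<forall>a\<in>hset Rg. \<forall>b\<in>hset Rg. a * b \<in> q \<longrightarrow> a \<in> Gr Rg q \<or> b \<in> Gr Rg q)"

definition gr_prime_sub ::
  "('g \<Rightarrow> 'a::comm_ring_1 set) \<Rightarrow> ('g \<Rightarrow> 'b::ab_group_add set) \<Rightarrow> ('a \<Rightarrow> 'b \<Rightarrow> 'b) \<Rightarrow> 'b set \<Rightarrow> bool" where
  "gr_prime_sub Rg Mg scale P \<longleftrightarrow> gr_submodule Mg scale P \<and> P \<noteq> UNIV \<and>
     (\<forall>r\<in>hset Rg. \<forall>m\<in>hset Mg. scale r m \<in> P \<longrightarrow> m \<in> P \<or> r \<in> colon scale P)"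

text \<open>Gr_M(K); the intersection of the empty family is UNIV = M\<close>
definition GrM ::
  "('g \<Rightarrow> 'a::comm_ring_1 set) \<Rightarrow> ('g \<Rightarrow> 'b::ab_group_add set) \<Rightarrow> ('a \<Rightarrow> 'b \<Rightarrow> 'b) \<Rightarrow> 'b set \<Rightarrow> 'b set" where
  "GrM Rg Mg scale K = \<Inter> {P. gr_prime_sub Rg Mg scale P \<and> K \<subseteq> P}"

definition primeful ::
  "('g \<Rightarrow> 'a::comm_ring_1 set) \<Rightarrow> ('g \<Rightarrow> 'b::ab_group_add set) \<Rightarrow> ('a \<Rightarrow> 'b \<Rightarrow> 'b) \<Rightarrow> 'b set \<Rightarrow> bool" where
  "primeful Rg Mg scale K \<longleftrightarrow> (\<forall>p. gr_prime_ideal Rg p \<and> colon scale K \<subseteq> p \<longrightarrow>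
     (\<exists>P. gr_prime_sub Rg Mg scale P \<and> K \<subseteq> P \<and> colon scale P = p))"

definition gr_qp_sub ::
  "('g \<Rightarrow> 'a::comm_ring_1 set) \<Rightarrow> ('g \<Rightarrow> 'b::ab_group_add set) \<Rightarrow> ('a \<Rightarrow> 'b \<Rightarrow> 'b) \<Rightarrow> 'b set \<Rightarrow> bool" where
  "gr_qp_sub Rg Mg scale Q \<longleftrightarrow> gr_submodule Mg scale Q \<and> Q \<noteq> UNIV \<and>
     (\<forall>r\<in>hset Rg. \<forall>m\<in>hset Mg. scale r m \<in> Q \<longrightarrow>
        r \<in> Gr Rg (colon scale Q) \<or> m \<in> GrM Rg Mg scale Q)"

definition qpSpec ::
  "('g \<Rightarrow> 'a::comm_ring_1 set) \<Rightarrow> ('g \<Rightarrow> 'b::ab_group_add set) \<Rightarrow> ('a \<Rightarrow> 'b \<Rightarrow> 'b) \<Rightarrow> 'b set set" where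
  "qpSpec Rg Mg scale = {Q. gr_qp_sub Rg Mg scale Q \<and> primeful Rg Mg scale Q}"

definition qpVM ::
  "('g \<Rightarrow> 'a::comm_ring_1 set) \<Rightarrow> ('g \<Rightarrow> 'b::ab_group_add set) \<Rightarrow> ('a \<Rightarrow> 'b \<Rightarrow> 'b) \<Rightarrow> 'b set \<Rightarrow> 'b set set" where
  "qpVM Rg Mg scale K = {Q \<in> qpSpec Rg Mg scale.
     Gr Rg (colon scale K) \<subseteq> Gr Rg (colon scale Q)}"

definition qp_closed ::
  "('g \<Rightarrow> 'a::comm_ring_1 set) \<Rightarrow> ('g \<Rightarrow> 'b::ab_group_add set) \<Rightarrow> ('a \<Rightarrow> 'b \<Rightarrow> 'b) \<Rightarrow> 'b set set \<Rightarrow> bool" where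
  "qp_closed Rg Mg scale A \<longleftrightarrow> (\<exists>K. gr_submodule Mg scale K \<and> A = qpVM Rg Mg scale K)"

definition qp_irreducible ::
  "('g \<Rightarrow> 'a::comm_ring_1 set) \<Rightarrow> ('g \<Rightarrow> 'b::ab_group_add set) \<Rightarrow> ('a \<Rightarrow> 'b \<Rightarrow> 'b) \<Rightarrow> 'b set set \<Rightarrow> bool" where
  "qp_irreducible Rg Mg scale A \<longleftrightarrow> A \<noteq> {} \<and> A \<subseteq> qpSpec Rg Mg scale \<and>
     (\<forall>A1 A2. qp_closed Rg Mg scale A1 \<and> qp_closed Rg Mg scale A2 \<and> A \<subseteq> A1 \<union> A2
        \<longrightarrow> A \<subseteq> A1 \<or> A \<subseteq> A2)"

definition qp_irr_components ::
  "('g \<Rightarrow> 'a::comm_ring_1 set) \<Rightarrow> ('g \<Rightarrow> 'b::ab_group_add set) \<Rightarrow> ('a \<Rightarrow> 'b \<Rightarrow> 'b) \<Rightarrow> 'b set set set" where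
  "qp_irr_components Rg Mg scale = {A. qp_irreducible Rg Mg scale A \<and>
     (\<forall>B. qp_irreducible Rg Mg scale B \<and> A \<subseteq> B \<longrightarrow> B = A)}"

definition qpVR :: "('g \<Rightarrow> 'a::comm_ring_1 set) \<Rightarrow> 'a set \<Rightarrow> 'a set set" where
  "qpVR Rg I = {q. gr_qp_ideal Rg q \<and> I \<subseteq> q}"

definition VR :: "('g \<Rightarrow> 'a::comm_ring_1 set) \<Rightarrow> 'a set \<Rightarrow> 'a set set" where
  "VR Rg I = {p. gr_prime_ideal Rg p \<and> I \<subseteq> p}"

definition ideal_times_M :: "('a::comm_ring_1 \<Rightarrow> 'b::ab_group_add \<Rightarrow> 'b) \<Rightarrow> 'a set \<Rightarrow> 'b set" where
  "ideal_times_M scale I = module.span scale {scale r m | r m. r \<in> I}"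

definition quasi_primaryful ::
  "('g \<Rightarrow> 'a::comm_ring_1 set) \<Rightarrow> ('g \<Rightarrow> 'b::ab_group_add set) \<Rightarrow> ('a \<Rightarrow> 'b \<Rightarrow> 'b) \<Rightarrow> bool" where
  "quasi_primaryful Rg Mg scale \<longleftrightarrow> (UNIV :: 'b set) = {0} \<or>
     ((UNIV :: 'b set) \<noteq> {0} \<and> (\<forall>q\<in>qpVR Rg (Ann scale).
        \<exists>Q\<in>qpSpec Rg Mg scale. Gr Rg (colon scale Q) = Gr Rg q))"

end

theory Submission
  imports Defs
begin

text \<open>For \<open>Q\<close> in \<open>qp.Spec\<^sub>g(M)\<close> the graded radical \<open>Gr((Q :\<^sub>R M))\<close> is a graded prime ideal
  containing \<open>Ann(M)\<close>: if \<open>ab\<close> lies in it and \<open>a\<close> does not, the quasi-primary condition puts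
  \<open>b\<^sup>n M\<close> into \<open>Gr\<^sub>M(Q)\<close>, and the primeful property (together with prime avoidance) shows that a
  homogeneous element annihilating \<open>M/Gr\<^sub>M(Q)\<close> lies in \<open>Gr((Q :\<^sub>R M))\<close>.
  A closed set \<open>qp-V\<^sub>M\<^sup>g(K)\<close> only depends on \<open>Gr((K :\<^sub>R M))\<close>, so the closure of a point \<open>Q\<close> is
  \<open>qp_variety p = {Q'. p \<subseteq> Gr((Q' :\<^sub>R M))}\<close> with \<open>p = Gr((Q :\<^sub>R M))\<close>, and \<open>qp_variety p\<close> is irreducible.
  Conversely, since \<open>{Q. a \<in> Gr((Q :\<^sub>R M))} = qp-V\<^sub>M\<^sup>g(aM)\<close> is closed for homogeneous \<open>a\<close>, the
  intersection of the primes \<open>Gr((Q :\<^sub>R M))\<close> over an irreducible set is again a graded prime over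
  \<open>Ann(M)\<close>, and the set lies in \<open>qp_variety p\<close> for a minimal prime \<open>p\<close> below that intersection.
  Quasi-primaryfulness makes every graded prime over \<open>Ann(M)\<close> of the form \<open>Gr((Q :\<^sub>R M))\<close>; hence
  the irreducible components are exactly the \<open>qp_variety p\<close> with \<open>p\<close> minimal over \<open>Ann(M)\<close>, and
  \<open>qp_variety p = qp-V\<^sub>M\<^sup>g(pM)\<close> because \<open>(pM :\<^sub>R M) = p\<close> for such \<open>p\<close>.\<close>

section \<open>Homogeneous components\<close>

lemma hom_decI:
  assumes "finite S" "\<And>g. g \<notin> S \<Longrightarrow> c g = 0" "\<And>g. c g \<in> A g" "x = sum c S"
  shows "hom_dec A x c"
proof -
  have "{g. c g \<noteq> 0} \<subseteq> S" using assms(2) by blast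
  moreover have "sum c S = sum c {g. c g \<noteq> 0}"
    by (rule sum.mono_neutral_right) (use assms(1,2) in auto)
  ultimately show ?thesis
    using assms unfolding hom_dec_def by (auto intro: finite_subset)
qed

definition hom_comp :: "('g \<Rightarrow> 'x::ab_group_add set) \<Rightarrow> 'x \<Rightarrow> 'g \<Rightarrow> 'x" where
  "hom_comp A x = (THE c. hom_dec A x c)"

context
  fixes A :: "'g \<Rightarrow> 'x::ab_group_add set"
  assumes decomp: "graded_decomp A"
begin

lemma graded_decomp_zero: "0 \<in> A g"
  using decomp by (simp add: graded_decomp_def)

lemma graded_decomp_add:
  assumes "x \<in> A g" "y \<in> A g"
  shows "x + y \<in> A g"
proof -
  have "0 - y \<in> A g" using decomp assms(2) graded_decomp_zero unfolding graded_decomp_def by blast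
  then have "x - (0 - y) \<in> A g" using decomp assms(1) unfolding graded_decomp_def by blast
  then show ?thesis by simp
qed

lemma hom_dec_hom_comp: "hom_dec A x (hom_comp A x)"
  using decomp unfolding hom_comp_def graded_decomp_def by (metis theI')

lemma hom_comp_eq: "hom_dec A x c \<Longrightarrow> hom_comp A x = c"
  using decomp hom_dec_hom_comp unfolding graded_decomp_def by blast

lemma hom_comp_in: "hom_comp A x g \<in> A g"
  using hom_dec_hom_comp by (simp add: hom_dec_def)

lemma finite_hom_comp_support: "finite {g. hom_comp A x g \<noteq> 0}"
  using hom_dec_hom_comp by (simp add: hom_dec_def)

lemma sum_hom_comp: "sum (hom_comp A x) {g. hom_comp A x g \<noteq> 0} = x"
  using hom_dec_hom_comp by (simp add: hom_dec_def)

lemma sum_hom_comp_superset: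
  assumes "finite S" "{g. hom_comp A x g \<noteq> 0} \<subseteq> S"
  shows "sum (hom_comp A x) S = x"
  using sum.mono_neutral_left[OF assms, of "hom_comp A x"] sum_hom_comp by auto

lemma hom_comp_zero: "hom_comp A 0 = (\<lambda>g. 0)"
  by (rule hom_comp_eq, rule hom_decI[where S = "{}"]) (auto simp: graded_decomp_zero)

lemma hom_comp_homogeneous:
  assumes "y \<in> A g"
  shows "hom_comp A y = (\<lambda>h. if h = g then y else 0)"
  by (rule hom_comp_eq, rule hom_decI[where S = "{g}"]) (use assms graded_decomp_zero in auto)

lemma hom_comp_add: "hom_comp A (x + y) g = hom_comp A x g + hom_comp A y g"
proof -
  let ?S = "{g. hom_comp A x g \<noteq> 0} \<union> {g. hom_comp A y g \<noteq> 0}"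
  have fin: "finite ?S" using finite_hom_comp_support by blast
  have "sum (hom_comp A x) ?S = x" "sum (hom_comp A y) ?S = y"
    by (auto intro: sum_hom_comp_superset[OF fin])
  then have "hom_dec A (x + y) (\<lambda>g. hom_comp A x g + hom_comp A y g)"
    by (intro hom_decI[OF fin]) (auto simp: sum.distrib intro: graded_decomp_add hom_comp_in)
  then show ?thesis by (simp add: hom_comp_eq)
qed

lemma hom_comp_sum_reindex:
  assumes "\<And>h. t' (t h) = h" "\<And>k. t (t' k) = k" "finite S"
    "\<And>h. h \<notin> S \<Longrightarrow> f h = 0" "\<And>h. f h \<in> A (t h)"
  shows "hom_comp A (sum f S) k = f (t' k)"
proof -
  have "inj_on t S" using assms(1) by (metis inj_on_inverseI)
  then have "sum f S = sum (\<lambda>k. f (t' k)) (t ` S)"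
    by (simp add: sum.reindex assms(1))
  moreover have "f (t' k) = 0" if "k \<notin> t ` S" for k
    using that assms(2,4) by (metis image_eqI)
  ultimately have "hom_dec A (sum f S) (\<lambda>k. f (t' k))"
    using assms(2,3,5) by (intro hom_decI[where S = "t ` S"]) (auto, metis)
  then show ?thesis by (simp add: hom_comp_eq)
qed

lemma graded_subset_iff: "graded_subset A N \<longleftrightarrow> (\<forall>x\<in>N. \<forall>g. hom_comp A x g \<in> N)"
  unfolding graded_subset_def using hom_comp_eq hom_dec_hom_comp by metis

end

section \<open>Ideals, radicals and graded radicals\<close>

lemma is_ideal_zero: "is_ideal I \<Longrightarrow> 0 \<in> I"
  by (simp add: is_ideal_def)

lemma is_ideal_add: "is_ideal I \<Longrightarrow> x \<in> I \<Longrightarrow> y \<in> I \<Longrightarrow> x + y \<in> I"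
  by (simp add: is_ideal_def)

lemma is_ideal_mult_left: "is_ideal I \<Longrightarrow> x \<in> I \<Longrightarrow> r * x \<in> I"
  by (simp add: is_ideal_def)

lemma is_ideal_mult_right: "is_ideal I \<Longrightarrow> x \<in> I \<Longrightarrow> x * r \<in> I"
  by (metis is_ideal_mult_left mult.commute)

lemma is_ideal_sum: "is_ideal I \<Longrightarrow> (\<And>i. i \<in> S \<Longrightarrow> f i \<in> I) \<Longrightarrow> sum f S \<in> I"
  by (induction S rule: infinite_finite_induct) (auto simp: is_ideal_zero is_ideal_add)

lemma is_ideal_one_iff: "is_ideal I \<Longrightarrow> 1 \<in> I \<longleftrightarrow> I = UNIV"
  using is_ideal_mult_left[of I 1] by force

lemma is_ideal_power_mono:
  assumes "is_ideal I" "a ^ n \<in> I" "n \<le> m"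
  shows "a ^ m \<in> I"
proof -
  have "a ^ m = a ^ (m - n) * a ^ n"
    using assms(3) by (simp flip: power_add)
  then show ?thesis using is_ideal_mult_left[OF assms(1,2)] by simp
qed

lemma is_ideal_power_add:
  assumes I: "is_ideal I" and "a ^ n \<in> I" "b ^ m \<in> I"
  shows "(a + b) ^ (n + m) \<in> I"
proof -
  have "of_nat ((n + m) choose k) * a ^ k * b ^ (n + m - k) \<in> I" for k
  proof (cases "n \<le> k")
    case True
    then have "a ^ k \<in> I" using assms is_ideal_power_mono by blast
    then have "(of_nat ((n + m) choose k) * b ^ (n + m - k)) * a ^ k \<in> I"
      using I is_ideal_mult_left by blast
    then show ?thesis by (simp add: ac_simps)
  next
    case False
    then have "b ^ (n + m - k) \<in> I" using assms is_ideal_power_mono[OF I] by simp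
    then show ?thesis using I is_ideal_mult_left by blast
  qed
  then show ?thesis by (simp add: binomial_ring is_ideal_sum[OF I])
qed

definition rad :: "'a::comm_ring_1 set \<Rightarrow> 'a set" where
  "rad I = {x. \<exists>n>0. x ^ n \<in> I}"

lemma subset_rad: "I \<subseteq> rad I"
  unfolding rad_def by (auto intro: exI[of _ 1])

lemma rad_add:
  assumes I: "is_ideal I" and "x \<in> rad I" "y \<in> rad I"
  shows "x + y \<in> rad I"
proof -
  obtain n m where "n > 0" "m > 0" "x ^ n \<in> I" "y ^ m \<in> I"
    using assms unfolding rad_def by blast
  then show ?thesis unfolding rad_def using is_ideal_power_add[OF I] by (intro CollectI exI[of _ "n + m"]) auto
qed

lemma rad_mult:
  assumes "is_ideal I" "x \<in> rad I"
  shows "r * x \<in> rad I"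
proof -
  obtain n where "n > 0" "x ^ n \<in> I" using assms(2) unfolding rad_def by blast
  then have "(r * x) ^ n \<in> I" using is_ideal_mult_left[OF assms(1)] by (simp add: power_mult_distrib)
  then show ?thesis using \<open>n > 0\<close> unfolding rad_def by blast
qed

lemma rad_sum: "is_ideal I \<Longrightarrow> (\<And>i. i \<in> S \<Longrightarrow> f i \<in> rad I) \<Longrightarrow> sum f S \<in> rad I"
  by (induction S rule: infinite_finite_induct)
    (auto simp: rad_add is_ideal_zero subset_rad[THEN subsetD])

lemma mem_rad_of_power:
  assumes "n > 0" "x ^ n \<in> rad I"
  shows "x \<in> rad I"
proof -
  obtain k where "k > 0" "(x ^ n) ^ k \<in> I" using assms(2) unfolding rad_def by blast
  then have "x ^ (n * k) \<in> I" "n * k > 0" using assms(1) by (simp_all add: power_mult)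
  then show ?thesis unfolding rad_def by blast
qed

lemma rad_one_iff: "1 \<in> rad I \<longleftrightarrow> 1 \<in> I"
  unfolding rad_def by auto

lemma Gr_mono:
  assumes "I \<subseteq> J"
  shows "Gr Rg I \<subseteq> Gr Rg J"
proof
  fix x assume "x \<in> Gr Rg I"
  then obtain c where "hom_dec Rg x c" "\<forall>g. \<exists>n>0. c g ^ n \<in> I" unfolding Gr_def by blast
  then show "x \<in> Gr Rg J" unfolding Gr_def using assms by blast
qed

lemma hset_iff: "a \<in> hset A \<longleftrightarrow> (\<exists>g. a \<in> A g)"
  by (simp add: hset_def)

context
  fixes Rg :: "'g::group_add \<Rightarrow> 'a::comm_ring_1 set"
  assumes graded: "graded_ring Rg"
begin

lemma graded_ring_decomp: "graded_decomp Rg"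
  using graded by (simp add: graded_ring_def)

lemma graded_ring_mult: "a \<in> Rg g \<Longrightarrow> b \<in> Rg h \<Longrightarrow> a * b \<in> Rg (g + h)"
  using graded by (simp add: graded_ring_def)

lemma hset_mult: "a \<in> hset Rg \<Longrightarrow> b \<in> hset Rg \<Longrightarrow> a * b \<in> hset Rg"
  unfolding hset_iff using graded_ring_mult by blast

lemma hset_power: "a \<in> hset Rg \<Longrightarrow> n > 0 \<Longrightarrow> a ^ n \<in> hset Rg"
proof (induction n)
  case (Suc n)
  then show ?case by (cases n) (auto intro: hset_mult)
qed simp

lemma is_ideal_hom_comps_imp:
  assumes "is_ideal I" "\<And>g. hom_comp Rg x g \<in> I"
  shows "x \<in> I"
proof -
  have "sum (hom_comp Rg x) {g. hom_comp Rg x g \<noteq> 0} \<in> I" by (rule is_ideal_sum[OF assms])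
  then show ?thesis by (simp add: sum_hom_comp[OF graded_ring_decomp])
qed

lemma Gr_iff: "x \<in> Gr Rg I \<longleftrightarrow> (\<forall>g. hom_comp Rg x g \<in> rad I)"
  unfolding Gr_def rad_def
  using hom_comp_eq[OF graded_ring_decomp] hom_dec_hom_comp[OF graded_ring_decomp] by blast

context
  fixes I :: "'a set"
  assumes ideal: "is_ideal I"
begin

lemma Gr_subset_rad: "Gr Rg I \<subseteq> rad I"
proof
  fix x assume "x \<in> Gr Rg I"
  then have "sum (hom_comp Rg x) {g. hom_comp Rg x g \<noteq> 0} \<in> rad I"
    by (intro rad_sum[OF ideal]) (simp add: Gr_iff)
  then show "x \<in> rad I" by (simp add: sum_hom_comp[OF graded_ring_decomp])
qed

lemma rad_zero: "0 \<in> rad I"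
  using subset_rad is_ideal_zero[OF ideal] by blast

lemma homogeneous_in_Gr_iff:
  assumes "a \<in> hset Rg"
  shows "a \<in> Gr Rg I \<longleftrightarrow> a \<in> rad I"
proof -
  obtain g where "a \<in> Rg g" using assms by (auto simp: hset_iff)
  then show ?thesis
    using rad_zero by (auto simp: Gr_iff hom_comp_homogeneous[OF graded_ring_decomp] dest: spec[of _ g])
qed

lemma homogeneous_power_in_Gr:
  assumes "a \<in> hset Rg" "n > 0" "a ^ n \<in> Gr Rg I"
  shows "a \<in> Gr Rg I"
  using assms mem_rad_of_power[of n a I] hset_power[OF assms(1,2)] by (simp add: homogeneous_in_Gr_iff)

lemma Gr_zero: "0 \<in> Gr Rg I"
  unfolding Gr_iff hom_comp_zero[OF graded_ring_decomp] using rad_zero by simp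

lemma Gr_add: "x \<in> Gr Rg I \<Longrightarrow> y \<in> Gr Rg I \<Longrightarrow> x + y \<in> Gr Rg I"
  unfolding Gr_iff hom_comp_add[OF graded_ring_decomp] by (simp add: rad_add[OF ideal])

lemma Gr_sum: "(\<And>i. i \<in> S \<Longrightarrow> f i \<in> Gr Rg I) \<Longrightarrow> sum f S \<in> Gr Rg I"
  by (induction S rule: infinite_finite_induct) (auto simp: Gr_zero Gr_add)

lemma Gr_mult:
  assumes x: "x \<in> Gr Rg I"
  shows "r * x \<in> Gr Rg I"
proof -
  let ?x = "hom_comp Rg x" and ?r = "hom_comp Rg r"
  have "r * x = (\<Sum>h\<in>{h. ?r h \<noteq> 0}. \<Sum>g\<in>{g. ?x g \<noteq> 0}. ?r h * ?x g)"
    unfolding sum_product[symmetric] by (simp add: sum_hom_comp[OF graded_ring_decomp])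
  also have "\<dots> \<in> Gr Rg I"
  proof (intro Gr_sum)
    fix g h
    have "?r h * ?x g \<in> Rg (h + g)"
      by (intro graded_ring_mult hom_comp_in graded_ring_decomp)
    then have "?r h * ?x g \<in> hset Rg" by (auto simp: hset_iff)
    moreover have "?r h * ?x g \<in> rad I" using x rad_mult[OF ideal] by (simp add: Gr_iff)
    ultimately show "?r h * ?x g \<in> Gr Rg I" by (simp add: homogeneous_in_Gr_iff)
  qed
  finally show ?thesis .
qed

lemma gr_ideal_Gr: "gr_ideal Rg (Gr Rg I)"
proof -
  have "hom_comp Rg x g \<in> Gr Rg I" if "x \<in> Gr Rg I" for x g
  proof -
    have "hom_comp Rg x g \<in> hset Rg" using hom_comp_in[OF graded_ring_decomp] by (auto simp: hset_iff)
    then show ?thesis using that Gr_iff[of x] homogeneous_in_Gr_iff by blast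
  qed
  then show ?thesis
    unfolding gr_ideal_def is_ideal_def graded_subset_iff[OF graded_ring_decomp]
    by (simp add: Gr_zero Gr_add Gr_mult)
qed

end

lemma subset_Gr:
  assumes "graded_subset Rg I"
  shows "I \<subseteq> Gr Rg I"
proof
  fix x assume "x \<in> I"
  then have "hom_comp Rg x g \<in> I" for g
    using assms by (simp add: graded_subset_iff[OF graded_ring_decomp])
  then show "x \<in> Gr Rg I" using subset_rad by (auto simp: Gr_iff)
qed

context
  fixes p :: "'a set"
  assumes prime: "gr_prime_ideal Rg p"
begin

lemma gr_prime_ideal_is_ideal: "is_ideal p"
  using prime by (simp add: gr_prime_ideal_def gr_ideal_def)

lemma homogeneous_rad_gr_prime_ideal:
  assumes a: "a \<in> hset Rg" and "a \<in> rad p"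
  shows "a \<in> p"
proof -
  have "a ^ Suc n \<in> p \<Longrightarrow> a \<in> p" for n
  proof (induction n)
    case (Suc n)
    have "a * a ^ Suc n \<in> p" using Suc.prems by simp
    moreover have "a ^ Suc n \<in> hset Rg" using hset_power[OF a, of "Suc n"] by simp
    ultimately have "a \<in> p \<or> a ^ Suc n \<in> p"
      using prime a unfolding gr_prime_ideal_def by blast
    then show ?case using Suc.IH by blast
  qed simp
  moreover obtain n where "n > 0" "a ^ n \<in> p" using \<open>a \<in> rad p\<close> unfolding rad_def by blast
  ultimately show ?thesis by (cases n) auto
qed

lemma Gr_gr_prime_ideal: "Gr Rg p = p"
proof
  show "p \<subseteq> Gr Rg p"
    using prime by (simp add: subset_Gr gr_prime_ideal_def gr_ideal_def)
  show "Gr Rg p \<subseteq> p"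
  proof
    fix x assume "x \<in> Gr Rg p"
    then have "hom_comp Rg x g \<in> p" for g
    proof (intro homogeneous_rad_gr_prime_ideal)
      show "hom_comp Rg x g \<in> hset Rg"
        using hom_comp_in[OF graded_ring_decomp] by (auto simp: hset_iff)
    qed (simp add: Gr_iff)
    then show "x \<in> p" by (rule is_ideal_hom_comps_imp[OF gr_prime_ideal_is_ideal])
  qed
qed

lemma gr_prime_ideal_imp_qp: "gr_qp_ideal Rg p"
  using prime Gr_gr_prime_ideal by (simp add: gr_qp_ideal_def gr_prime_ideal_def)

end

lemma VR_subset_qpVR: "VR Rg I \<subseteq> qpVR Rg I"
  using gr_prime_ideal_imp_qp by (auto simp: VR_def qpVR_def)

end

section \<open>Existence of graded prime ideals\<close>

definition ideal_insert :: "'a::comm_ring_1 set \<Rightarrow> 'a \<Rightarrow> 'a set" where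
  "ideal_insert P a = {p + r * a | p r. p \<in> P}"

lemma subset_ideal_insert: "P \<subseteq> ideal_insert P a"
proof
  fix p assume "p \<in> P"
  moreover have "p = p + 0 * a" by simp
  ultimately show "p \<in> ideal_insert P a" unfolding ideal_insert_def by blast
qed

lemma in_ideal_insert: "is_ideal P \<Longrightarrow> a \<in> ideal_insert P a"
proof -
  assume "is_ideal P"
  then have "0 \<in> P" "a = 0 + 1 * a" by (simp_all add: is_ideal_zero)
  then show ?thesis unfolding ideal_insert_def by blast
qed

lemma is_ideal_ideal_insert:
  assumes P: "is_ideal P"
  shows "is_ideal (ideal_insert P a)"
  unfolding is_ideal_def
proof (intro conjI ballI allI)
  show "0 \<in> ideal_insert P a" using subset_ideal_insert is_ideal_zero[OF P] by blast
  show "x + y \<in> ideal_insert P a" if xy: "x \<in> ideal_insert P a" "y \<in> ideal_insert P a" for x y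
  proof -
    obtain p q r s where "x = p + r * a" "y = q + s * a" "p \<in> P" "q \<in> P"
      using xy unfolding ideal_insert_def by blast
    then have "x + y = (p + q) + (r + s) * a" "p + q \<in> P"
      using is_ideal_add[OF P] by (auto simp: algebra_simps)
    then show ?thesis unfolding ideal_insert_def by blast
  qed
  show "r * x \<in> ideal_insert P a" if x: "x \<in> ideal_insert P a" for r x
  proof -
    obtain p s where "x = p + s * a" "p \<in> P" using x unfolding ideal_insert_def by blast
    then have "r * x = r * p + (r * s) * a" "r * p \<in> P"
      using is_ideal_mult_left[OF P] by (auto simp: algebra_simps)
    then show ?thesis unfolding ideal_insert_def by blast
  qed
qed

lemma ideal_insert_mult:
  assumes P: "is_ideal P" and "a * b \<in> P" "u \<in> ideal_insert P a" "v \<in> ideal_insert P b"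
  shows "u * v \<in> P"
proof -
  obtain p q r s where pq: "u = p + r * a" "v = q + s * b" "p \<in> P" "q \<in> P"
    using assms(3,4) unfolding ideal_insert_def by blast
  then have "u * v = p * v + q * (r * a) + (r * s) * (a * b)"
    by (simp add: algebra_simps)
  also have "\<dots> \<in> P"
    using is_ideal_mult_right[OF P pq(3)] is_ideal_mult_right[OF P pq(4)]
      is_ideal_mult_left[OF P assms(2)] by (intro is_ideal_add[OF P])
  finally show ?thesis .
qed

lemma gr_ideal_chain_Union:
  assumes "C \<noteq> {}" "\<And>P. P \<in> C \<Longrightarrow> gr_ideal Rg P"
    "\<And>P Q. P \<in> C \<Longrightarrow> Q \<in> C \<Longrightarrow> P \<subseteq> Q \<or> Q \<subseteq> P"
  shows "gr_ideal Rg (\<Union>C)"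
proof -
  have ideals: "is_ideal P" "graded_subset Rg P" if "P \<in> C" for P
    using assms(2)[OF that] by (simp_all add: gr_ideal_def)
  have "is_ideal (\<Union>C)" unfolding is_ideal_def
  proof (intro conjI ballI allI)
    show "0 \<in> \<Union>C" using assms(1) is_ideal_zero[OF ideals(1)] by blast
    show "x + y \<in> \<Union>C" if xy: "x \<in> \<Union>C" "y \<in> \<Union>C" for x y
    proof -
      obtain P Q where "P \<in> C" "Q \<in> C" "x \<in> P" "y \<in> Q" using xy by blast
      then show ?thesis using assms(3)[of P Q] is_ideal_add[OF ideals(1)] by blast
    qed
    show "r * x \<in> \<Union>C" if "x \<in> \<Union>C" for r x
      using that is_ideal_mult_left[OF ideals(1)] by blast
  qed
  moreover have "graded_subset Rg (\<Union>C)"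
    unfolding graded_subset_def
  proof
    fix x assume "x \<in> \<Union>C"
    then obtain P where "P \<in> C" "x \<in> P" by blast
    then obtain c where "hom_dec Rg x c" "\<forall>g. c g \<in> P"
      using ideals(2) unfolding graded_subset_def by blast
    then show "\<exists>c. hom_dec Rg x c \<and> (\<forall>g. c g \<in> \<Union>C)" using \<open>P \<in> C\<close> by blast
  qed
  ultimately show ?thesis by (simp add: gr_ideal_def)
qed

definition minimal_prime_over :: "('g \<Rightarrow> 'a::comm_ring_1 set) \<Rightarrow> 'a set \<Rightarrow> 'a set \<Rightarrow> bool" where
  "minimal_prime_over Rg I p \<longleftrightarrow> p \<in> VR Rg I \<and> (\<forall>p'\<in>VR Rg I. p' \<subseteq> p \<longrightarrow> p' = p)"

lemma minimal_prime_overD: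
  assumes "minimal_prime_over Rg I p"
  shows "p \<in> VR Rg I" "\<And>p'. p' \<in> VR Rg I \<Longrightarrow> p' \<subseteq> p \<Longrightarrow> p' = p"
  using assms by (auto simp: minimal_prime_over_def)

context
  fixes Rg :: "'g::group_add \<Rightarrow> 'a::comm_ring_1 set"
  assumes graded: "graded_ring Rg"
begin

lemma gr_ideal_ideal_insert:
  assumes P: "gr_ideal Rg P" and a: "a \<in> Rg d"
  shows "gr_ideal Rg (ideal_insert P a)"
proof -
  have iP: "is_ideal P" using P by (simp add: gr_ideal_def)
  have "hom_comp Rg y k \<in> ideal_insert P a" if y_in: "y \<in> ideal_insert P a" for y k
  proof -
    obtain p r where y: "y = p + r * a" "p \<in> P" using y_in unfolding ideal_insert_def by blast
    have "r * a = (\<Sum>h\<in>{h. hom_comp Rg r h \<noteq> 0}. hom_comp Rg r h * a)"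
      by (simp add: sum_hom_comp[OF graded_ring_decomp[OF graded]] flip: sum_distrib_right)
    also have "hom_comp Rg \<dots> k = hom_comp Rg r (k - d) * a"
      by (rule hom_comp_sum_reindex[OF graded_ring_decomp[OF graded], where t = "\<lambda>h. h + d"])
        (auto simp: finite_hom_comp_support[OF graded_ring_decomp[OF graded]]
          intro: graded_ring_mult[OF graded] hom_comp_in[OF graded_ring_decomp[OF graded]] a)
    finally have "hom_comp Rg (r * a) k = hom_comp Rg r (k - d) * a" .
    moreover have "hom_comp Rg p k \<in> P"
      using P y(2) by (simp add: gr_ideal_def graded_subset_iff[OF graded_ring_decomp[OF graded]])
    ultimately have "hom_comp Rg y k = hom_comp Rg p k + hom_comp Rg r (k - d) * a"
      "hom_comp Rg p k \<in> P"
      by (simp_all add: y(1) hom_comp_add[OF graded_ring_decomp[OF graded]])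
    then show ?thesis unfolding ideal_insert_def by blast
  qed
  then show ?thesis
    using is_ideal_ideal_insert[OF iP]
    by (simp add: gr_ideal_def graded_subset_iff[OF graded_ring_decomp[OF graded]])
qed

lemma gr_prime_ideal_if_maximal_avoiding_powers:
  assumes P: "gr_ideal Rg P" and xP: "\<forall>n. x ^ n \<notin> P"
    and max: "\<And>J. gr_ideal Rg J \<Longrightarrow> P \<subseteq> J \<Longrightarrow> \<forall>n. x ^ n \<notin> J \<Longrightarrow> J = P"
  shows "gr_prime_ideal Rg P"
proof -
  have iP: "is_ideal P" using P by (simp add: gr_ideal_def)
  have power_in_insert: "\<exists>n. x ^ n \<in> ideal_insert P a" if a: "a \<in> hset Rg" "a \<notin> P" for a
  proof (rule ccontr)
    assume "\<not> (\<exists>n. x ^ n \<in> ideal_insert P a)"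
    moreover have "gr_ideal Rg (ideal_insert P a)"
      using a(1) gr_ideal_ideal_insert[OF P] by (auto simp: hset_iff)
    ultimately have "ideal_insert P a = P" using max subset_ideal_insert by blast
    then show False using in_ideal_insert[OF iP] a(2) by blast
  qed
  have "a \<in> P \<or> b \<in> P" if ab: "a \<in> hset Rg" "b \<in> hset Rg" "a * b \<in> P" for a b
  proof (rule ccontr)
    assume "\<not> (a \<in> P \<or> b \<in> P)"
    then obtain n m where "x ^ n \<in> ideal_insert P a" "x ^ m \<in> ideal_insert P b"
      using power_in_insert ab by blast
    then have "x ^ (n + m) \<in> P" unfolding power_add by (rule ideal_insert_mult[OF iP ab(3)])
    then show False using xP by blast
  qed
  moreover have "P \<noteq> UNIV" using xP by blast
  ultimately show ?thesis using P unfolding gr_prime_ideal_def by blast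
qed

lemma exists_gr_prime_ideal_avoiding_powers:
  assumes I: "gr_ideal Rg I" and x: "\<forall>n. x ^ n \<notin> I"
  shows "\<exists>p. gr_prime_ideal Rg p \<and> I \<subseteq> p \<and> x \<notin> p"
proof -
  define S where "S = {P. gr_ideal Rg P \<and> I \<subseteq> P \<and> (\<forall>n. x ^ n \<notin> P)}"
  have "\<exists>U\<in>S. \<forall>X\<in>C. X \<subseteq> U" if C: "C \<in> chains S" for C
  proof (cases "C = {}")
    case True
    then show ?thesis using I x unfolding S_def by blast
  next
    case False
    have "gr_ideal Rg (\<Union>C)"
      using chainsD2[OF C] chainsD[OF C] by (intro gr_ideal_chain_Union[OF False]) (auto simp: S_def)
    then have "\<Union>C \<in> S" using False chainsD2[OF C] unfolding S_def by blast
    then show ?thesis by blast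
  qed
  then have "\<exists>P\<in>S. \<forall>X\<in>S. P \<subseteq> X \<longrightarrow> X = P"
    by (intro Zorn_Lemma2) blast
  then obtain P where "P \<in> S" and max: "\<And>J. J \<in> S \<Longrightarrow> P \<subseteq> J \<Longrightarrow> J = P"
    by blast
  then have P: "gr_ideal Rg P" "I \<subseteq> P" "\<forall>n. x ^ n \<notin> P" by (simp_all add: S_def)
  have "gr_prime_ideal Rg P"
  proof (rule gr_prime_ideal_if_maximal_avoiding_powers[OF P(1,3)])
    fix J assume J: "gr_ideal Rg J" "P \<subseteq> J" "\<forall>n. x ^ n \<notin> J"
    then have "J \<in> S" using P(2) by (auto simp: S_def)
    then show "J = P" using max J(2) by blast
  qed
  moreover have "x \<notin> P" using P(3)[rule_format, of 1] by simp
  ultimately show ?thesis using P(2) by blast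
qed

lemma gr_ideal_Inter:
  assumes "\<And>P. P \<in> D \<Longrightarrow> gr_ideal Rg P"
  shows "gr_ideal Rg (\<Inter>D)"
proof -
  have "is_ideal P" "graded_subset Rg P" if "P \<in> D" for P
    using assms[OF that] by (simp_all add: gr_ideal_def)
  then have "is_ideal (\<Inter>D)" "\<forall>x\<in>\<Inter>D. \<forall>g. hom_comp Rg x g \<in> \<Inter>D"
    unfolding is_ideal_def graded_subset_iff[OF graded_ring_decomp[OF graded]] by blast+
  then show ?thesis
    by (simp add: gr_ideal_def graded_subset_iff[OF graded_ring_decomp[OF graded]])
qed

lemma gr_prime_ideal_Inter:
  assumes "D \<noteq> {}" and primes: "\<And>P. P \<in> D \<Longrightarrow> gr_prime_ideal Rg P"
    and "\<And>a b. a \<in> hset Rg \<Longrightarrow> b \<in> hset Rg \<Longrightarrow> a * b \<in> \<Inter>D \<Longrightarrow> a \<in> \<Inter>D \<or> b \<in> \<Inter>D"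
  shows "gr_prime_ideal Rg (\<Inter>D)"
proof -
  have "1 \<notin> P" if "P \<in> D" for P
    using primes[OF that] is_ideal_one_iff by (auto simp: gr_prime_ideal_def gr_ideal_def)
  then have "\<Inter>D \<noteq> UNIV" using assms(1) by blast
  moreover have "gr_ideal Rg (\<Inter>D)"
    using primes by (intro gr_ideal_Inter) (simp add: gr_prime_ideal_def)
  ultimately show ?thesis using assms(3) by (simp add: gr_prime_ideal_def)
qed

lemma gr_prime_ideal_chain_Inter:
  assumes "D \<noteq> {}" and primes: "\<And>P. P \<in> D \<Longrightarrow> gr_prime_ideal Rg P"
    and chain: "\<And>P Q. P \<in> D \<Longrightarrow> Q \<in> D \<Longrightarrow> P \<subseteq> Q \<or> Q \<subseteq> P"
  shows "gr_prime_ideal Rg (\<Inter>D)"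
proof (rule gr_prime_ideal_Inter[OF assms(1,2)])
  fix a b assume ab: "a \<in> hset Rg" "b \<in> hset Rg" "a * b \<in> \<Inter>D"
  have a_or_b: "a \<in> R \<or> b \<in> R" if "R \<in> D" for R
    using primes[OF that] ab that unfolding gr_prime_ideal_def by blast
  show "a \<in> \<Inter>D \<or> b \<in> \<Inter>D"
  proof (rule ccontr)
    assume "\<not> (a \<in> \<Inter>D \<or> b \<in> \<Inter>D)"
    then obtain P Q where PQ: "P \<in> D" "Q \<in> D" "a \<notin> P" "b \<notin> Q" by blast
    then show False using chain[OF PQ(1,2)] a_or_b[OF PQ(1)] a_or_b[OF PQ(2)] by blast
  qed
qed

lemma exists_minimal_prime_over:
  assumes "p0 \<in> VR Rg I"
  shows "\<exists>p. minimal_prime_over Rg I p \<and> p \<subseteq> p0"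
proof -
  let ?A = "{p \<in> VR Rg I. p \<subseteq> p0}"
  have "\<exists>m\<in>?A. \<forall>p\<in>?A. p \<subseteq> m \<longrightarrow> p = m"
  proof (rule predicate_Zorn)
    show "partial_order_on ?A (relation_of (\<lambda>p q. q \<subseteq> p) ?A)"
      by (rule partial_order_on_relation_ofI) auto
    fix C assume C: "C \<in> Chains (relation_of (\<lambda>p q. q \<subseteq> p) ?A)"
    show "\<exists>u\<in>?A. \<forall>p\<in>C. u \<subseteq> p"
    proof (cases "C = {}")
      case True
      then show ?thesis using assms by blast
    next
      case False
      have CA: "C \<subseteq> ?A" by (rule Chains_relation_of[OF C])
      have "gr_prime_ideal Rg (\<Inter>C)"
      proof (rule gr_prime_ideal_chain_Inter[OF False])
        show "gr_prime_ideal Rg P" if "P \<in> C" for P using that CA by (auto simp: VR_def)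
        show "P \<subseteq> Q \<or> Q \<subseteq> P" if "P \<in> C" "Q \<in> C" for P Q
          using C that unfolding Chains_def relation_of_def by blast
      qed
      then have "\<Inter>C \<in> ?A" using CA False by (auto simp: VR_def)
      then show ?thesis by blast
    qed
  qed
  then obtain m where m: "m \<in> ?A" and min: "\<forall>p\<in>?A. p \<subseteq> m \<longrightarrow> p = m" ..
  have "minimal_prime_over Rg I m"
    unfolding minimal_prime_over_def
  proof (intro conjI ballI impI)
    show "m \<in> VR Rg I" using m by simp
    show "p = m" if "p \<in> VR Rg I" "p \<subseteq> m" for p
      using min m that by auto
  qed
  then show ?thesis using m by auto
qed

end

section \<open>Colon ideals of graded submodules\<close>

lemma colon_is_ideal:
  assumes M: "module scale" and N: "module.subspace scale N"
  shows "is_ideal (colon scale N)"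
  unfolding is_ideal_def colon_def
  using module.subspace_0[OF M N] module.subspace_add[OF M N] module.subspace_scale[OF M N]
  by (simp add: module.scale_left_distrib[OF M] module.scale_zero_left[OF M]
      flip: module.scale_scale[OF M])

lemma one_notin_colon: "module scale \<Longrightarrow> N \<noteq> UNIV \<Longrightarrow> 1 \<notin> colon scale N"
  unfolding colon_def by (auto simp: module.scale_one)

lemma Ann_subset_colon: "module scale \<Longrightarrow> module.subspace scale N \<Longrightarrow> Ann scale \<subseteq> colon scale N"
  unfolding Ann_def colon_def using module.subspace_0 by fastforce

lemma subset_colon_ideal_times_M: "module scale \<Longrightarrow> I \<subseteq> colon scale (ideal_times_M scale I)"
  unfolding colon_def ideal_times_M_def by (auto intro: module.span_base)

lemma colon_range_scale_power:
  assumes M: "module scale" and s: "s \<in> colon scale (range (scale a))"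
  shows "s ^ k \<in> colon scale (range (scale (a ^ k)))"
proof (induction k)
  case 0
  then show ?case by (simp add: colon_def)
next
  case (Suc k)
  have "scale (s ^ Suc k) m \<in> range (scale (a ^ Suc k))" for m
  proof -
    obtain u where u: "scale s m = scale a u" using s by (auto simp: colon_def)
    obtain v where v: "scale (s ^ k) u = scale (a ^ k) v" using Suc.IH by (auto simp: colon_def)
    have "scale (s ^ Suc k) m = scale (s ^ k) (scale s m)"
      by (simp add: module.scale_scale[OF M] mult.commute)
    also have "\<dots> = scale a (scale (s ^ k) u)" by (simp add: u module.scale_left_commute[OF M])
    also have "\<dots> = scale (a ^ Suc k) v" by (simp add: v module.scale_scale[OF M])
    finally show ?thesis by simp
  qed
  then show ?case by (simp add: colon_def)
qed

context
  fixes Rg :: "'g::group_add \<Rightarrow> 'a::comm_ring_1 set"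
    and Mg :: "'g \<Rightarrow> 'b::ab_group_add set"
    and scale :: "'a \<Rightarrow> 'b \<Rightarrow> 'b"
  assumes graded_mod: "graded_module Rg Mg scale"
begin

lemma graded_module_ring: "graded_ring Rg"
  using graded_mod by (simp add: graded_module_def)

lemma graded_module_module: "module scale"
  using graded_mod by (simp add: graded_module_def)

lemma graded_module_decomp: "graded_decomp Mg"
  using graded_mod by (simp add: graded_module_def)

lemma graded_module_scale: "r \<in> Rg g \<Longrightarrow> m \<in> Mg h \<Longrightarrow> scale r m \<in> Mg (g + h)"
  using graded_mod by (simp add: graded_module_def)

lemma hset_scale: "r \<in> hset Rg \<Longrightarrow> m \<in> hset Mg \<Longrightarrow> scale r m \<in> hset Mg"
  unfolding hset_iff using graded_module_scale by blast

lemma colon_iff_homogeneous: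
  assumes N: "module.subspace scale N"
  shows "r \<in> colon scale N \<longleftrightarrow> (\<forall>m\<in>hset Mg. scale r m \<in> N)"
proof
  assume hom: "\<forall>m\<in>hset Mg. scale r m \<in> N"
  have "scale r m \<in> N" for m
  proof -
    have "scale r m = (\<Sum>h\<in>{h. hom_comp Mg m h \<noteq> 0}. scale r (hom_comp Mg m h))"
      by (simp add: sum_hom_comp[OF graded_module_decomp]
          flip: module.scale_sum_right[OF graded_module_module])
    also have "\<dots> \<in> N"
    proof (rule module.subspace_sum[OF graded_module_module N])
      fix h
      have "hom_comp Mg m h \<in> hset Mg"
        using hom_comp_in[OF graded_module_decomp] by (auto simp: hset_iff)
      then show "scale r (hom_comp Mg m h) \<in> N" using hom by blast
    qed
    finally show ?thesis .
  qed
  then show "r \<in> colon scale N" by (simp add: colon_def)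
qed (simp add: colon_def)

lemma hom_comp_colon:
  assumes N: "gr_submodule Mg scale N" and x: "x \<in> colon scale N"
  shows "hom_comp Rg x g \<in> colon scale N"
proof -
  have decR: "graded_decomp Rg" by (rule graded_ring_decomp[OF graded_module_ring])
  have "scale (hom_comp Rg x g) m \<in> N" if m: "m \<in> Mg h" for m h
  proof -
    have "scale x m = (\<Sum>g'\<in>{g'. hom_comp Rg x g' \<noteq> 0}. scale (hom_comp Rg x g') m)"
      by (simp add: sum_hom_comp[OF decR] flip: module.scale_sum_left[OF graded_module_module])
    also have "hom_comp Mg \<dots> (g + h) = scale (hom_comp Rg x (g + h - h)) m"
      by (rule hom_comp_sum_reindex[OF graded_module_decomp, where t = "\<lambda>g'. g' + h"])
        (auto simp: finite_hom_comp_support[OF decR] module.scale_zero_left[OF graded_module_module]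
          intro: graded_module_scale hom_comp_in[OF decR] m)
    finally have "hom_comp Mg (scale x m) (g + h) = scale (hom_comp Rg x g) m" by simp
    moreover have "hom_comp Mg (scale x m) (g + h) \<in> N"
      using N x by (simp add: colon_def gr_submodule_def graded_subset_iff[OF graded_module_decomp])
    ultimately show ?thesis by simp
  qed
  then show ?thesis
    using N by (auto simp: colon_iff_homogeneous gr_submodule_def hset_iff)
qed

lemma colon_gr_ideal: "gr_submodule Mg scale N \<Longrightarrow> gr_ideal Rg (colon scale N)"
  using colon_is_ideal[OF graded_module_module] hom_comp_colon
  by (simp add: gr_ideal_def gr_submodule_def graded_subset_iff[OF graded_ring_decomp[OF graded_module_ring]])

lemma gr_submodule_range_scale:
  assumes a: "a \<in> Rg d"
  shows "gr_submodule Mg scale (range (scale a))"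
proof -
  have M: "module scale" by (rule graded_module_module)
  have "module.subspace scale (range (scale a))"
    unfolding module.subspace_def[OF M]
  proof (intro conjI ballI allI)
    show "0 \<in> range (scale a)" using module.scale_zero_right[OF M, of a] by (metis rangeI)
    show "x + y \<in> range (scale a)" if "x \<in> range (scale a)" "y \<in> range (scale a)" for x y
      using that by (auto simp flip: module.scale_right_distrib[OF M])
    show "scale c x \<in> range (scale a)" if "x \<in> range (scale a)" for c x
      using that by (auto simp: module.scale_left_commute[OF M, of c a])
  qed
  moreover have "hom_comp Mg (scale a m) k \<in> range (scale a)" for m k
  proof -
    have "scale a m = (\<Sum>h\<in>{h. hom_comp Mg m h \<noteq> 0}. scale a (hom_comp Mg m h))"
      by (simp add: sum_hom_comp[OF graded_module_decomp] flip: module.scale_sum_right[OF M])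
    also have "hom_comp Mg \<dots> k = scale a (hom_comp Mg m (- d + k))"
      by (rule hom_comp_sum_reindex[OF graded_module_decomp, where t = "\<lambda>h. d + h"])
        (auto simp: finite_hom_comp_support[OF graded_module_decomp] add.assoc[symmetric]
          module.scale_zero_right[OF M]
          intro: graded_module_scale[OF a] hom_comp_in[OF graded_module_decomp])
    finally show ?thesis by simp
  qed
  ultimately show ?thesis
    by (auto simp: gr_submodule_def graded_subset_iff[OF graded_module_decomp])
qed

end

section \<open>The graded prime ideal attached to a quasi-primary submodule\<close>

lemma qpSpecD:
  assumes "Q \<in> qpSpec Rg Mg scale"
  shows "gr_submodule Mg scale Q" "Q \<noteq> UNIV"
    "\<And>r m. r \<in> hset Rg \<Longrightarrow> m \<in> hset Mg \<Longrightarrow> scale r m \<in> Q \<Longrightarrow>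
        r \<in> Gr Rg (colon scale Q) \<or> m \<in> GrM Rg Mg scale Q"
    "primeful Rg Mg scale Q"
  using assms unfolding qpSpec_def gr_qp_sub_def by auto

lemma GrM_subspace: "module scale \<Longrightarrow> module.subspace scale (GrM Rg Mg scale Q)"
  unfolding GrM_def gr_prime_sub_def gr_submodule_def by (auto intro: module.subspace_Inter)

context
  fixes Rg :: "'g::group_add \<Rightarrow> 'a::comm_ring_1 set"
    and Mg :: "'g \<Rightarrow> 'b::ab_group_add set"
    and scale :: "'a \<Rightarrow> 'b \<Rightarrow> 'b"
  assumes graded_mod: "graded_module Rg Mg scale"
begin

context
  fixes Q :: "'b set"
  assumes Q: "Q \<in> qpSpec Rg Mg scale"
begin

lemma qpSpec_colon_gr_ideal: "gr_ideal Rg (colon scale Q)"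
  using colon_gr_ideal[OF graded_mod qpSpecD(1)[OF Q]] .

lemma qpSpec_colon_is_ideal: "is_ideal (colon scale Q)"
  using qpSpec_colon_gr_ideal by (simp add: gr_ideal_def)

lemma homogeneous_in_Gr_colon_iff:
  "a \<in> hset Rg \<Longrightarrow> a \<in> Gr Rg (colon scale Q) \<longleftrightarrow> a \<in> rad (colon scale Q)"
  by (rule homogeneous_in_Gr_iff[OF graded_module_ring[OF graded_mod] qpSpec_colon_is_ideal])

text \<open>This is where the primeful property enters: a graded prime ideal over \<open>(Q :\<^sub>R M)\<close>
  avoiding \<open>b\<close> is the colon ideal of a graded prime submodule containing \<open>Gr\<^sub>M(Q)\<close>.\<close>
lemma homogeneous_colon_GrM_in_Gr_colon:
  assumes b: "b \<in> hset Rg" "b \<in> colon scale (GrM Rg Mg scale Q)"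
  shows "b \<in> Gr Rg (colon scale Q)"
proof (rule ccontr)
  assume "b \<notin> Gr Rg (colon scale Q)"
  then have "b ^ n \<notin> colon scale Q" for n
    using one_notin_colon[OF graded_module_module[OF graded_mod] qpSpecD(2)[OF Q]]
    by (cases n) (auto simp: homogeneous_in_Gr_colon_iff[OF b(1)] rad_def)
  then obtain p where p: "gr_prime_ideal Rg p" "colon scale Q \<subseteq> p" "b \<notin> p"
    using exists_gr_prime_ideal_avoiding_powers[OF graded_module_ring[OF graded_mod] qpSpec_colon_gr_ideal]
    by blast
  then obtain P where P: "gr_prime_sub Rg Mg scale P" "Q \<subseteq> P" "colon scale P = p"
    using qpSpecD(4)[OF Q] unfolding primeful_def by blast
  then have "GrM Rg Mg scale Q \<subseteq> P" unfolding GrM_def by blast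
  then have "b \<in> colon scale P" using b(2) unfolding colon_def by blast
  then show False using P(3) p(3) by simp
qed

lemma gr_prime_ideal_Gr_colon: "gr_prime_ideal Rg (Gr Rg (colon scale Q))"
proof -
  have graded: "graded_ring Rg" and M: "module scale"
    by (rule graded_module_ring[OF graded_mod] graded_module_module[OF graded_mod])+
  let ?phi = "Gr Rg (colon scale Q)"
  have "1 \<notin> ?phi"
    using Gr_subset_rad[OF graded qpSpec_colon_is_ideal] rad_one_iff
      one_notin_colon[OF M qpSpecD(2)[OF Q]] by blast
  moreover have "a \<in> ?phi \<or> b \<in> ?phi"
    if a: "a \<in> hset Rg" and b: "b \<in> hset Rg" and ab: "a * b \<in> ?phi" for a b
  proof (cases "a \<in> ?phi")
    case a_notin: False
    obtain n where n: "n > 0" "(a * b) ^ n \<in> colon scale Q"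
      using ab hset_mult[OF graded a b] unfolding homogeneous_in_Gr_colon_iff[OF hset_mult[OF graded a b]] rad_def
      by blast
    have "a ^ n \<notin> ?phi"
      using a_notin homogeneous_power_in_Gr[OF graded qpSpec_colon_is_ideal a n(1)] by blast
    then have "scale (b ^ n) m \<in> GrM Rg Mg scale Q" if m: "m \<in> hset Mg" for m
    proof -
      have "scale (a ^ n) (scale (b ^ n) m) \<in> Q"
        using n(2) by (simp add: colon_def power_mult_distrib module.scale_scale[OF M])
      moreover have "scale (b ^ n) m \<in> hset Mg"
        by (rule hset_scale[OF graded_mod hset_power[OF graded b n(1)] m])
      ultimately show ?thesis
        using qpSpecD(3)[OF Q hset_power[OF graded a n(1)]] \<open>a ^ n \<notin> ?phi\<close> by blast
    qed
    then have "b ^ n \<in> colon scale (GrM Rg Mg scale Q)"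
      by (simp add: colon_iff_homogeneous[OF graded_mod GrM_subspace[OF M]])
    then have "b ^ n \<in> ?phi"
      by (rule homogeneous_colon_GrM_in_Gr_colon[OF hset_power[OF graded b n(1)]])
    then show ?thesis using homogeneous_power_in_Gr[OF graded qpSpec_colon_is_ideal b n(1)] by blast
  qed simp
  ultimately show ?thesis
    using gr_ideal_Gr[OF graded qpSpec_colon_is_ideal] by (auto simp: gr_prime_ideal_def)
qed

lemma Gr_colon_in_VR_Ann: "Gr Rg (colon scale Q) \<in> VR Rg (Ann scale)"
proof -
  have "Ann scale \<subseteq> colon scale Q"
    using Ann_subset_colon graded_module_module[OF graded_mod] qpSpecD(1)[OF Q]
    by (auto simp: gr_submodule_def)
  also have "\<dots> \<subseteq> Gr Rg (colon scale Q)"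
    using subset_Gr[OF graded_module_ring[OF graded_mod]] qpSpec_colon_gr_ideal
    by (simp add: gr_ideal_def)
  finally show ?thesis using gr_prime_ideal_Gr_colon by (simp add: VR_def)
qed

lemma colon_ideal_times_M_Gr_colon:
  "colon scale (ideal_times_M scale (Gr Rg (colon scale Q))) = Gr Rg (colon scale Q)"
proof
  let ?p = "Gr Rg (colon scale Q)"
  have M: "module scale" by (rule graded_module_module[OF graded_mod])
  show "?p \<subseteq> colon scale (ideal_times_M scale ?p)" by (rule subset_colon_ideal_times_M[OF M])
  have "colon scale Q \<subseteq> ?p"
    using subset_Gr[OF graded_module_ring[OF graded_mod]] qpSpec_colon_gr_ideal
    by (simp add: gr_ideal_def)
  then obtain P where P: "gr_prime_sub Rg Mg scale P" "Q \<subseteq> P" "colon scale P = ?p"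
    using qpSpecD(4)[OF Q] gr_prime_ideal_Gr_colon unfolding primeful_def by blast
  have "ideal_times_M scale ?p \<subseteq> P"
    unfolding ideal_times_M_def
    using P(1,3) by (intro module.span_minimal[OF M]) (auto simp: colon_def gr_prime_sub_def gr_submodule_def)
  then show "colon scale (ideal_times_M scale ?p) \<subseteq> ?p"
    using P(3) unfolding colon_def by blast
qed

lemma Gr_colon_range_scale_subset_iff:
  assumes a: "a \<in> Rg d"
  shows "Gr Rg (colon scale (range (scale a))) \<subseteq> Gr Rg (colon scale Q) \<longleftrightarrow> a \<in> Gr Rg (colon scale Q)"
proof
  have aM: "gr_submodule Mg scale (range (scale a))" by (rule gr_submodule_range_scale[OF graded_mod a])
  have "a \<in> colon scale (range (scale a))" by (simp add: colon_def)
  also have "\<dots> \<subseteq> Gr Rg (colon scale (range (scale a)))"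
    using subset_Gr[OF graded_module_ring[OF graded_mod]] colon_gr_ideal[OF graded_mod aM]
    by (simp add: gr_ideal_def)
  finally show "Gr Rg (colon scale (range (scale a))) \<subseteq> Gr Rg (colon scale Q) \<Longrightarrow> a \<in> Gr Rg (colon scale Q)"
    by blast
next
  have graded: "graded_ring Rg" by (rule graded_module_ring[OF graded_mod])
  have decR: "graded_decomp Rg" by (rule graded_ring_decomp[OF graded])
  let ?phi = "Gr Rg (colon scale Q)"
  assume "a \<in> ?phi"
  moreover have "a \<in> hset Rg" using a by (auto simp: hset_iff)
  ultimately have "a \<in> rad (colon scale Q)" by (simp add: homogeneous_in_Gr_colon_iff)
  then obtain n where n: "n > 0" "a ^ n \<in> colon scale Q" unfolding rad_def by blast
  have comps: "hom_comp Rg r g \<in> ?phi" if r: "r \<in> colon scale (range (scale a))" for r g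
  proof -
    let ?s = "hom_comp Rg r g"
    have "?s ^ n \<in> colon scale (range (scale (a ^ n)))"
      by (intro colon_range_scale_power graded_module_module[OF graded_mod]
          hom_comp_colon[OF graded_mod gr_submodule_range_scale[OF graded_mod a] r])
    have "scale (?s ^ n) m \<in> Q" for m
    proof -
      obtain u where "scale (?s ^ n) m = scale (a ^ n) u"
        using \<open>?s ^ n \<in> colon scale (range (scale (a ^ n)))\<close> by (auto simp: colon_def)
      then show ?thesis using n(2) by (simp add: colon_def)
    qed
    then have "?s ^ n \<in> colon scale Q" by (simp add: colon_def)
    then have "?s \<in> rad (colon scale Q)" using n(1) by (auto simp: rad_def)
    moreover have "?s \<in> hset Rg" using hom_comp_in[OF decR] by (auto simp: hset_iff)
    ultimately show ?thesis by (simp add: homogeneous_in_Gr_colon_iff)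
  qed
  have "colon scale (range (scale a)) \<subseteq> ?phi"
    using is_ideal_hom_comps_imp[OF graded gr_prime_ideal_is_ideal[OF graded gr_prime_ideal_Gr_colon]]
      comps by blast
  then have "Gr Rg (colon scale (range (scale a))) \<subseteq> Gr Rg ?phi" by (rule Gr_mono)
  then show "Gr Rg (colon scale (range (scale a))) \<subseteq> ?phi"
    by (simp add: Gr_gr_prime_ideal[OF graded gr_prime_ideal_Gr_colon])
qed

lemma colon_ideal_times_M_Gr_colon_eq:
  "Gr Rg (colon scale (ideal_times_M scale (Gr Rg (colon scale Q)))) = Gr Rg (colon scale Q)"
  using Gr_gr_prime_ideal[OF graded_module_ring[OF graded_mod] gr_prime_ideal_Gr_colon]
  by (simp add: colon_ideal_times_M_Gr_colon)

end

end

section \<open>Irreducible components of the quasi-Zariski topology\<close>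

definition qp_variety ::
  "('g \<Rightarrow> 'a::comm_ring_1 set) \<Rightarrow> ('g \<Rightarrow> 'b::ab_group_add set) \<Rightarrow> ('a \<Rightarrow> 'b \<Rightarrow> 'b) \<Rightarrow> 'a set \<Rightarrow> 'b set set" where
  "qp_variety Rg Mg scale I = {Q \<in> qpSpec Rg Mg scale. I \<subseteq> Gr Rg (colon scale Q)}"

lemma qpVM_eq_qp_variety: "qpVM Rg Mg scale K = qp_variety Rg Mg scale (Gr Rg (colon scale K))"
  by (simp add: qpVM_def qp_variety_def)

lemma qp_closed_supset_qp_variety:
  assumes "qp_closed Rg Mg scale A" "Q \<in> A"
  shows "qp_variety Rg Mg scale (Gr Rg (colon scale Q)) \<subseteq> A"
  using assms by (auto simp: qp_closed_def qpVM_eq_qp_variety qp_variety_def)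

text \<open>By the previous lemma \<open>qp_variety (Gr((Q :\<^sub>R M)))\<close> is the closure of \<open>{Q}\<close>.\<close>
lemma qp_irreducible_qp_variety:
  assumes "Q \<in> qpSpec Rg Mg scale"
  shows "qp_irreducible Rg Mg scale (qp_variety Rg Mg scale (Gr Rg (colon scale Q)))"
proof -
  let ?V = "qp_variety Rg Mg scale (Gr Rg (colon scale Q))"
  have "Q \<in> ?V" using assms by (simp add: qp_variety_def)
  moreover have "?V \<subseteq> A1 \<or> ?V \<subseteq> A2"
    if "qp_closed Rg Mg scale A1" "qp_closed Rg Mg scale A2" "?V \<subseteq> A1 \<union> A2" for A1 A2
    using qp_closed_supset_qp_variety[OF that(1)] qp_closed_supset_qp_variety[OF that(2)]
      that(3) \<open>Q \<in> ?V\<close> by blast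
  ultimately show ?thesis unfolding qp_irreducible_def by (auto simp: qp_variety_def)
qed

context
  fixes Rg :: "'g::group_add \<Rightarrow> 'a::comm_ring_1 set"
    and Mg :: "'g \<Rightarrow> 'b::ab_group_add set"
    and scale :: "'a \<Rightarrow> 'b \<Rightarrow> 'b"
  assumes graded_mod: "graded_module Rg Mg scale"
begin

lemma qp_closed_qp_variety_homogeneous:
  assumes "a \<in> hset Rg"
  shows "qp_closed Rg Mg scale (qp_variety Rg Mg scale {a})"
proof -
  obtain d where d: "a \<in> Rg d" using assms by (auto simp: hset_iff)
  have "qpVM Rg Mg scale (range (scale a)) = qp_variety Rg Mg scale {a}"
    using Gr_colon_range_scale_subset_iff[OF graded_mod _ d]
    by (auto simp: qpVM_def qp_variety_def)
  then show ?thesis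
    using gr_submodule_range_scale[OF graded_mod d] unfolding qp_closed_def by blast
qed

lemma Inter_Gr_colon_in_VR_Ann:
  assumes B: "qp_irreducible Rg Mg scale B"
  shows "(\<Inter>Q\<in>B. Gr Rg (colon scale Q)) \<in> VR Rg (Ann scale)"
proof -
  have BS: "B \<subseteq> qpSpec Rg Mg scale" and "B \<noteq> {}"
    using B by (auto simp: qp_irreducible_def)
  let ?D = "(\<lambda>Q. Gr Rg (colon scale Q)) ` B"
  have primes: "gr_prime_ideal Rg P" "Ann scale \<subseteq> P" if "P \<in> ?D" for P
    using that BS Gr_colon_in_VR_Ann[OF graded_mod] by (auto simp: VR_def)
  have "gr_prime_ideal Rg (\<Inter>?D)"
  proof (rule gr_prime_ideal_Inter[OF graded_module_ring[OF graded_mod]])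
    show "?D \<noteq> {}" using \<open>B \<noteq> {}\<close> by blast
    show "gr_prime_ideal Rg P" if "P \<in> ?D" for P using primes(1)[OF that] .
    fix a b assume ab: "a \<in> hset Rg" "b \<in> hset Rg" "a * b \<in> \<Inter>?D"
    have "B \<subseteq> qp_variety Rg Mg scale {a} \<union> qp_variety Rg Mg scale {b}"
      using ab primes(1) BS unfolding gr_prime_ideal_def qp_variety_def by blast
    then have "B \<subseteq> qp_variety Rg Mg scale {a} \<or> B \<subseteq> qp_variety Rg Mg scale {b}"
      using B qp_closed_qp_variety_homogeneous ab(1,2) unfolding qp_irreducible_def by blast
    then show "a \<in> \<Inter>?D \<or> b \<in> \<Inter>?D" by (auto simp: qp_variety_def)
  qed
  moreover have "Ann scale \<subseteq> \<Inter>?D" using primes(2) by blast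
  ultimately show ?thesis by (simp add: VR_def)
qed

lemma qp_variety_in_qp_irr_components:
  assumes Q: "Q \<in> qpSpec Rg Mg scale"
    and min: "minimal_prime_over Rg (Ann scale) (Gr Rg (colon scale Q))"
  shows "qp_variety Rg Mg scale (Gr Rg (colon scale Q)) \<in> qp_irr_components Rg Mg scale"
proof -
  let ?p = "Gr Rg (colon scale Q)"
  have "B = qp_variety Rg Mg scale ?p"
    if B: "qp_irreducible Rg Mg scale B" "qp_variety Rg Mg scale ?p \<subseteq> B" for B
  proof -
    have "Q \<in> B" using B(2) Q by (auto simp: qp_variety_def)
    then have "(\<Inter>Q'\<in>B. Gr Rg (colon scale Q')) \<subseteq> ?p" by blast
    then have "(\<Inter>Q'\<in>B. Gr Rg (colon scale Q')) = ?p"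
      using min Inter_Gr_colon_in_VR_Ann[OF B(1)] by (simp add: minimal_prime_over_def)
    then have "B \<subseteq> qp_variety Rg Mg scale ?p"
      using B(1) by (auto simp: qp_irreducible_def qp_variety_def)
    then show ?thesis using B(2) by blast
  qed
  then show ?thesis
    using qp_irreducible_qp_variety[OF Q] unfolding qp_irr_components_def by blast
qed

lemma qp_irr_components_eq:
  assumes realize: "\<And>p. p \<in> VR Rg (Ann scale) \<Longrightarrow> \<exists>Q\<in>qpSpec Rg Mg scale. Gr Rg (colon scale Q) = p"
  shows "qp_irr_components Rg Mg scale =
    {qp_variety Rg Mg scale p | p. minimal_prime_over Rg (Ann scale) p}"
proof (intro equalityI subsetI)
  fix A assume "A \<in> qp_irr_components Rg Mg scale"
  then have irr: "qp_irreducible Rg Mg scale A"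
    and max: "\<And>B. qp_irreducible Rg Mg scale B \<Longrightarrow> A \<subseteq> B \<Longrightarrow> B = A"
    unfolding qp_irr_components_def by blast+
  obtain p where p: "minimal_prime_over Rg (Ann scale) p" "p \<subseteq> (\<Inter>Q\<in>A. Gr Rg (colon scale Q))"
    using exists_minimal_prime_over[OF graded_module_ring[OF graded_mod] Inter_Gr_colon_in_VR_Ann[OF irr]]
    by blast
  obtain Q where Q: "Q \<in> qpSpec Rg Mg scale" "Gr Rg (colon scale Q) = p"
    using realize[OF minimal_prime_overD(1)[OF p(1)]] by blast
  have "A \<subseteq> qpSpec Rg Mg scale" using irr by (simp add: qp_irreducible_def)
  then have A_sub: "A \<subseteq> qp_variety Rg Mg scale p" using p(2) by (auto simp: qp_variety_def)
  have "qp_irreducible Rg Mg scale (qp_variety Rg Mg scale p)"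
    using qp_irreducible_qp_variety[OF Q(1)] Q(2) by simp
  from max[OF this A_sub] have "A = qp_variety Rg Mg scale p" by simp
  then show "A \<in> {qp_variety Rg Mg scale p | p. minimal_prime_over Rg (Ann scale) p}"
    using p(1) by blast
next
  fix A assume "A \<in> {qp_variety Rg Mg scale p | p. minimal_prime_over Rg (Ann scale) p}"
  then obtain p where p: "minimal_prime_over Rg (Ann scale) p" "A = qp_variety Rg Mg scale p"
    by blast
  then obtain Q where Q: "Q \<in> qpSpec Rg Mg scale" "Gr Rg (colon scale Q) = p"
    using realize[OF minimal_prime_overD(1)[OF p(1)]] by blast
  then show "A \<in> qp_irr_components Rg Mg scale"
    using qp_variety_in_qp_irr_components[OF Q(1), unfolded Q(2), OF p(1)] p(2) by simp
qed

lemma qp_irr_components_eq_qpVM: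
  assumes realize: "\<And>p. p \<in> VR Rg (Ann scale) \<Longrightarrow> \<exists>Q\<in>qpSpec Rg Mg scale. Gr Rg (colon scale Q) = p"
  shows "qp_irr_components Rg Mg scale =
    {qpVM Rg Mg scale (ideal_times_M scale p) | p. minimal_prime_over Rg (Ann scale) p}"
proof -
  have eq: "qp_variety Rg Mg scale p = qpVM Rg Mg scale (ideal_times_M scale p)"
    if min: "minimal_prime_over Rg (Ann scale) p" for p
  proof -
    obtain Q where Q: "Q \<in> qpSpec Rg Mg scale" "Gr Rg (colon scale Q) = p"
      using realize[OF minimal_prime_overD(1)[OF min]] by blast
    have "Gr Rg (colon scale (ideal_times_M scale p)) = p"
      using colon_ideal_times_M_Gr_colon_eq[OF graded_mod Q(1)] unfolding Q(2) .
    then show ?thesis by (simp add: qpVM_eq_qp_variety)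
  qed
  have "qp_irr_components Rg Mg scale = {qp_variety Rg Mg scale p | p. minimal_prime_over Rg (Ann scale) p}"
    by (rule qp_irr_components_eq[OF realize])
  also have "\<dots> = {qpVM Rg Mg scale (ideal_times_M scale p) | p. minimal_prime_over Rg (Ann scale) p}"
    using eq by blast
  finally show ?thesis .
qed

end

lemma quasi_primaryful_realizes_VR_Ann:
  fixes scale :: "'a::comm_ring_1 \<Rightarrow> 'b::ab_group_add \<Rightarrow> 'b"
  assumes graded_mod: "graded_module Rg Mg scale" and "quasi_primaryful Rg Mg scale"
    and p: "p \<in> VR Rg (Ann scale)"
  shows "\<exists>Q\<in>qpSpec Rg Mg scale. Gr Rg (colon scale Q) = p"
proof (cases "(UNIV :: 'b set) = {0}")
  case True
  \<comment> \<open>then \<open>Ann(M) = R\<close> lies in no proper ideal\<close>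
  have "scale r m \<in> {0}" for r m using True by blast
  then have "Ann scale = UNIV" by (auto simp: Ann_def colon_def)
  then show ?thesis using p by (auto simp: VR_def gr_prime_ideal_def)
next
  case False
  have graded: "graded_ring Rg" by (rule graded_module_ring[OF graded_mod])
  have prime: "gr_prime_ideal Rg p" using p by (simp add: VR_def)
  have "p \<in> qpVR Rg (Ann scale)" using p VR_subset_qpVR[OF graded] by blast
  then obtain Q where "Q \<in> qpSpec Rg Mg scale" "Gr Rg (colon scale Q) = Gr Rg p"
    using assms(2) False unfolding quasi_primaryful_def by blast
  then show ?thesis using Gr_gr_prime_ideal[OF graded prime] by auto
qed

theorem theorem4p11:
  fixes Rg :: "'g::group_add \<Rightarrow> 'a::comm_ring_1 set"
    and Mg :: "'g \<Rightarrow> 'b::ab_group_add set"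
    and scale :: "'a \<Rightarrow> 'b \<Rightarrow> 'b"
  assumes "graded_module Rg Mg scale"
    and "quasi_primaryful Rg Mg scale"
  shows "qp_irr_components Rg Mg scale =
    {qpVM Rg Mg scale (ideal_times_M scale (Gr Rg q)) | q.
       q \<in> qpVR Rg (Ann scale) \<and> Gr Rg q \<in> VR Rg (Ann scale) \<and>
       (\<forall>p\<in>VR Rg (Ann scale). p \<subseteq> Gr Rg q \<longrightarrow> p = Gr Rg q)}"
proof -
  have graded: "graded_ring Rg" by (rule graded_module_ring[OF assms(1)])
  have "{qpVM Rg Mg scale (ideal_times_M scale (Gr Rg q)) | q.
       q \<in> qpVR Rg (Ann scale) \<and> Gr Rg q \<in> VR Rg (Ann scale) \<and>
       (\<forall>p\<in>VR Rg (Ann scale). p \<subseteq> Gr Rg q \<longrightarrow> p = Gr Rg q)}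
    = {qpVM Rg Mg scale (ideal_times_M scale p) | p. minimal_prime_over Rg (Ann scale) p}"
    (is "?L = ?R")
  proof
    show "?L \<subseteq> ?R" unfolding minimal_prime_over_def by blast
    show "?R \<subseteq> ?L"
    proof
      fix A assume "A \<in> ?R"
      then obtain p where p: "minimal_prime_over Rg (Ann scale) p"
        and A: "A = qpVM Rg Mg scale (ideal_times_M scale p)" by blast
      have prime: "gr_prime_ideal Rg p" using minimal_prime_overD(1)[OF p] by (simp add: VR_def)
      have "p \<in> qpVR Rg (Ann scale)" using minimal_prime_overD(1)[OF p] VR_subset_qpVR[OF graded] by blast
      moreover have Gr_p: "Gr Rg p = p" by (rule Gr_gr_prime_ideal[OF graded prime])
      moreover have "Gr Rg p \<in> VR Rg (Ann scale) \<and>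
          (\<forall>p'\<in>VR Rg (Ann scale). p' \<subseteq> Gr Rg p \<longrightarrow> p' = Gr Rg p)"
        using p unfolding Gr_p minimal_prime_over_def .
      moreover have "A = qpVM Rg Mg scale (ideal_times_M scale (Gr Rg p))"
        unfolding Gr_p by (rule A)
      ultimately show "A \<in> ?L" by blast
    qed
  qed
  then show ?thesis
    using qp_irr_components_eq_qpVM[OF assms(1) quasi_primaryful_realizes_VR_Ann[OF assms]] by simp
qed

end
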